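(* Let $\mathcal{A}_1$ and $\mathcal{A}_2$ be (unital, associative) algebras over a field $\mathbb{K}$ and let $\Phi\colon\mathcal{A}_1\to\mathcal{A}_2$ be a surjective algebra homomorphism such that $\ker(\Phi)$ is spanned as a $\mathbb{K}$-vector space by an idempotent $e$. If $\mathcal{A}_2$ is semisimple, then $\mathcal{A}_1$ is semisimple. *)

theory Defs
  imports Complex_Main
begin

definition k_algebra :: "('k::field \<Rightarrow> 'a::ring_1 \<Rightarrow> 'a) \<Rightarrow> bool" where
  "k_algebra s \<longleftrightarrow> Vector_Spaces.vector_space s \<and>
     (\<forall>c x y. s c (x * y) = s c x * y \<and> s c (x * y) = x * s c y)"

definition alg_hom :: "('k::field \<Rightarrow> 'a::ring_1 \<Rightarrow> 'a) \<Rightarrow> ('k \<Rightarrow> 'b::ring_1 \<Rightarrow> 'b)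
     \<Rightarrow> ('a \<Rightarrow> 'b) \<Rightarrow> bool" where
  "alg_hom s1 s2 \<Phi> \<longleftrightarrow> Vector_Spaces.linear s1 s2 \<Phi> \<and>
     (\<forall>x y. \<Phi> (x * y) = \<Phi> x * \<Phi> y) \<and> \<Phi> 1 = 1"

definition left_ideal :: "'a::ring_1 set \<Rightarrow> bool" where
  "left_ideal L \<longleftrightarrow> 0 \<in> L \<and> (\<forall>x\<in>L. \<forall>y\<in>L. x + y \<in> L) \<and> (\<forall>r. \<forall>x\<in>L. r * x \<in> L)"

text \<open>A ring is semisimple if it is semisimple as a left module over itself, i.e. every
  left submodule (left ideal) is a direct summand (Lam, First Course, Sect. 2).\<close>
definition semisimple_ring :: "'a::ring_1 itself \<Rightarrow> bool" where
  "semisimple_ring _ \<longleftrightarrow> (\<forall>L::'a set. left_ideal L \<longrightarrow>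
     (\<exists>M. left_ideal M \<and> L \<inter> M = {0} \<and> {x + y | x y. x \<in> L \<and> y \<in> M} = UNIV))"

end

theory Submission
  imports Defs
begin

text \<open>
  Pull back a decomposition \<open>\<Phi> L \<oplus> N = \<A>\<^sub>2\<close> along \<open>\<Phi>\<close>. The kernel \<open>K = span {e}\<close> is the
  left ideal \<open>\<A>\<^sub>1 e\<close>, and being one-dimensional it either meets a left ideal \<open>L\<close> trivially or
  lies inside it. In the first case \<open>\<Phi>\<^sup>-\<^sup>1 N\<close> is a complement of \<open>L\<close>; in the second one
  removes the kernel from \<open>\<Phi>\<^sup>-\<^sup>1 N\<close> by intersecting with the left annihilator of \<open>e\<close>, using
  the splitting \<open>m = m e + m (1 - e)\<close>.
\<close>

definition complementary_left_ideals :: "'a::ring_1 set \<Rightarrow> 'a set \<Rightarrow> bool" where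
  "complementary_left_ideals L M \<longleftrightarrow> left_ideal L \<and> left_ideal M \<and> L \<inter> M = {0} \<and>
     {x + y | x y. x \<in> L \<and> y \<in> M} = UNIV"

lemma semisimple_ring_iff_complementary_left_ideals:
  "semisimple_ring TYPE('a::ring_1) \<longleftrightarrow>
     (\<forall>L::'a set. left_ideal L \<longrightarrow> (\<exists>M. complementary_left_ideals L M))"
  unfolding semisimple_ring_def complementary_left_ideals_def by simp

lemma left_ideal_Int: "left_ideal L \<Longrightarrow> left_ideal M \<Longrightarrow> left_ideal (L \<inter> M)"
  by (simp add: left_ideal_def)

lemma left_ideal_Int_eq_zero:
  "left_ideal L \<Longrightarrow> left_ideal M \<Longrightarrow> L \<inter> M \<subseteq> {0} \<Longrightarrow> L \<inter> M = {0}"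
  unfolding left_ideal_def by blast

lemma left_ideal_left_annihilator: "left_ideal {m::'a::ring_1. m * e = 0}"
  by (simp add: left_ideal_def distrib_right mult.assoc)

locale surjective_ring_hom =
  fixes \<phi> :: "'a::ring_1 \<Rightarrow> 'b::ring_1"
  assumes hom_add: "\<phi> (x + y) = \<phi> x + \<phi> y"
    and hom_mult: "\<phi> (x * y) = \<phi> x * \<phi> y"
    and surj: "surj \<phi>"
begin

lemma hom_zero: "\<phi> 0 = 0"
  using hom_add[of 0 0] by simp

lemma hom_diff: "\<phi> (x - y) = \<phi> x - \<phi> y"
  using hom_add[of "x - y" y] by (simp add: algebra_simps)

lemma left_ideal_image: "left_ideal L \<Longrightarrow> left_ideal (\<phi> ` L)"
  unfolding left_ideal_def
proof (elim conjE, intro conjI ballI allI)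
  assume "0 \<in> L" then show "0 \<in> \<phi> ` L"
    using hom_zero by (metis imageI)
next
  fix x y assume "\<forall>x\<in>L. \<forall>y\<in>L. x + y \<in> L" "x \<in> \<phi> ` L" "y \<in> \<phi> ` L"
  then show "x + y \<in> \<phi> ` L"
    by (auto simp flip: hom_add)
next
  fix r x assume "\<forall>r. \<forall>x\<in>L. r * x \<in> L" "x \<in> \<phi> ` L"
  moreover obtain r' where "r = \<phi> r'"
    using surj by (metis surjD)
  ultimately show "r * x \<in> \<phi> ` L"
    by (auto simp flip: hom_mult)
qed

lemma left_ideal_vimage: "left_ideal N \<Longrightarrow> left_ideal (\<phi> -` N)"
  by (simp add: left_ideal_def hom_zero hom_add hom_mult)

lemma sum_vimage_eq_UNIV:
  assumes "{x + y | x y. x \<in> \<phi> ` L \<and> y \<in> N} = UNIV"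
  shows "{x + y | x y. x \<in> L \<and> y \<in> \<phi> -` N} = UNIV"
proof -
  have "z \<in> {x + y | x y. x \<in> L \<and> y \<in> \<phi> -` N}" for z
  proof -
    have "\<phi> z \<in> {x + y | x y. x \<in> \<phi> ` L \<and> y \<in> N}"
      using assms by simp
    then obtain l n where "l \<in> L" "n \<in> N" "\<phi> z = \<phi> l + n"
      by blast
    then have "z = l + (z - l) \<and> l \<in> L \<and> z - l \<in> \<phi> -` N"
      by (simp add: hom_diff)
    then show ?thesis
      by blast
  qed
  then show ?thesis
    by blast
qed

lemma complementary_vimage:
  assumes L: "left_ideal L" and LN: "complementary_left_ideals (\<phi> ` L) N"
    and trivial_Int_kernel: "\<And>x. x \<in> L \<Longrightarrow> \<phi> x = 0 \<Longrightarrow> x = 0"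
  shows "complementary_left_ideals L (\<phi> -` N)"
proof -
  have N: "left_ideal N" "\<phi> ` L \<inter> N = {0}" "{x + y | x y. x \<in> \<phi> ` L \<and> y \<in> N} = UNIV"
    using LN by (simp_all add: complementary_left_ideals_def)
  have M: "left_ideal (\<phi> -` N)"
    using N(1) by (rule left_ideal_vimage)
  have "L \<inter> \<phi> -` N \<subseteq> {0}"
  proof
    fix x assume x: "x \<in> L \<inter> \<phi> -` N"
    then have "\<phi> x \<in> \<phi> ` L \<inter> N" by blast
    with N(2) have "\<phi> x = 0" by simp
    with x trivial_Int_kernel show "x \<in> {0}" by simp
  qed
  with L M have "L \<inter> \<phi> -` N = {0}"
    by (rule left_ideal_Int_eq_zero)
  with L M sum_vimage_eq_UNIV[OF N(3)] show ?thesis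
    by (simp add: complementary_left_ideals_def)
qed

lemma complementary_vimage_Int_left_annihilator:
  assumes L: "left_ideal L" and LN: "complementary_left_ideals (\<phi> ` L) N"
    and idem: "e * e = e" and "\<phi> e = 0" and "e \<in> L"
    and kernel: "\<And>k. \<phi> k = 0 \<Longrightarrow> k * e = k"
  shows "complementary_left_ideals L (\<phi> -` N \<inter> {m. m * e = 0})"
    (is "complementary_left_ideals L ?M")
proof -
  have N: "left_ideal N" "\<phi> ` L \<inter> N = {0}" "{x + y | x y. x \<in> \<phi> ` L \<and> y \<in> N} = UNIV"
    using LN by (simp_all add: complementary_left_ideals_def)
  have M: "left_ideal ?M"
    using N(1) by (simp add: left_ideal_Int left_ideal_vimage left_ideal_left_annihilator)
  have "L \<inter> ?M \<subseteq> {0}"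
  proof
    fix x assume x: "x \<in> L \<inter> ?M"
    then have "\<phi> x \<in> \<phi> ` L \<inter> N" by blast
    with N(2) have "\<phi> x = 0" by simp
    then have "x = x * e" using kernel by simp
    with x show "x \<in> {0}" by simp
  qed
  with L M have "L \<inter> ?M = {0}"
    by (rule left_ideal_Int_eq_zero)
  moreover have "z \<in> {x + y | x y. x \<in> L \<and> y \<in> ?M}" for z
  proof -
    have "z \<in> {x + y | x y. x \<in> L \<and> y \<in> \<phi> -` N}"
      using sum_vimage_eq_UNIV[OF N(3)] by simp
    then obtain l m where lm: "z = l + m" "l \<in> L" "\<phi> m \<in> N"
      by blast
    have "l + m * e \<in> L"
      using lm(2) \<open>e \<in> L\<close> L by (simp add: left_ideal_def)
    moreover have "\<phi> (m - m * e) = \<phi> m"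
      by (simp add: hom_diff hom_mult \<open>\<phi> e = 0\<close>)
    moreover have "(m - m * e) * e = 0"
      by (simp add: left_diff_distrib mult.assoc idem)
    moreover have "z = (l + m * e) + (m - m * e)"
      using lm(1) by simp
    ultimately show ?thesis
      using lm(3) by blast
  qed
  then have "{x + y | x y. x \<in> L \<and> y \<in> ?M} = UNIV"
    by blast
  ultimately show ?thesis
    using L M by (simp add: complementary_left_ideals_def)
qed

theorem semisimple_ring_if_minimal_idempotent_kernel:
  assumes "semisimple_ring TYPE('b)"
    and idem: "e * e = e"
    and kernel: "\<And>x. \<phi> x = 0 \<longleftrightarrow> (\<exists>a. x = a * e)"
    and minimal: "\<And>L. left_ideal L \<Longrightarrow> L \<subseteq> {x. \<phi> x = 0} \<Longrightarrow> L = {0} \<or> L = {x. \<phi> x = 0}"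
  shows "semisimple_ring TYPE('a)"
  unfolding semisimple_ring_iff_complementary_left_ideals
proof (intro allI impI)
  fix L :: "'a set" assume L: "left_ideal L"
  then obtain N where N: "complementary_left_ideals (\<phi> ` L) N"
    using assms(1) left_ideal_image
    unfolding semisimple_ring_iff_complementary_left_ideals by blast
  have "left_ideal ({0} :: 'b set)"
    by (simp add: left_ideal_def)
  then have K: "left_ideal {x. \<phi> x = 0}"
    using left_ideal_vimage[of "{0}"] by (simp add: vimage_def)
  have "L \<inter> {x. \<phi> x = 0} = {0} \<or> L \<inter> {x. \<phi> x = 0} = {x. \<phi> x = 0}"
    using minimal[OF left_ideal_Int[OF L K] Int_lower2] .
  then consider "L \<inter> {x. \<phi> x = 0} = {0}" | "{x. \<phi> x = 0} \<subseteq> L"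
    by blast
  then show "\<exists>M. complementary_left_ideals L M"
  proof cases
    case 1
    have "x = 0" if "x \<in> L" "\<phi> x = 0" for x
      using 1 that by blast
    then have "complementary_left_ideals L (\<phi> -` N)"
      by (rule complementary_vimage[OF L N])
    then show ?thesis ..
  next
    case 2
    have e: "\<phi> e = 0"
      unfolding kernel by (rule exI[of _ 1]) simp
    have absorb: "k * e = k" if k: "\<phi> k = 0" for k
    proof -
      obtain a where "k = a * e"
        using k unfolding kernel by blast
      then show ?thesis
        by (simp add: mult.assoc idem)
    qed
    have "e \<in> L"
      using 2 e by blast
    with e absorb have "complementary_left_ideals L (\<phi> -` N \<inter> {m. m * e = 0})"
      by (intro complementary_vimage_Int_left_annihilator[OF L N idem])
    then show ?thesis ..
  qed
qed

end

lemma k_algebra_scale_eq_mult: "k_algebra s \<Longrightarrow> s c x = s c 1 * x"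
  unfolding k_algebra_def by (metis mult_1)

lemma left_ideal_subset_span_singleton:
  assumes "k_algebra s" "left_ideal L" "L \<subseteq> module.span s {e}"
  shows "L = {0} \<or> L = module.span s {e}"
proof -
  interpret vector_space s
    using assms(1) by (simp add: k_algebra_def)
  have scale_mem: "s c x \<in> L" if "x \<in> L" for c x
  proof -
    have "s c 1 * x \<in> L"
      using assms(2) that unfolding left_ideal_def by blast
    then show ?thesis
      using k_algebra_scale_eq_mult[OF assms(1), of c x] by simp
  qed
  show ?thesis
  proof (cases "e \<in> L")
    case True
    then have "span {e} \<subseteq> L"
      using scale_mem by (auto simp: span_singleton)
    with assms(3) show ?thesis
      by blast
  next
    case False
    have "x = 0" if x: "x \<in> L" for x
    proof (rule ccontr)
      assume "x \<noteq> 0"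
      obtain c where c: "x = s c e"
        using x assms(3) span_singleton by blast
      with \<open>x \<noteq> 0\<close> have "c \<noteq> 0"
        by auto
      then have "s (inverse c) x = e"
        by (simp add: c)
      with scale_mem[OF x, of "inverse c"] False show False
        by simp
    qed
    with assms(2) have "L = {0}"
      unfolding left_ideal_def by blast
    then show ?thesis ..
  qed
qed


theorem proposition4p7:
  fixes s1 :: "'k::field \<Rightarrow> 'a::ring_1 \<Rightarrow> 'a"
    and s2 :: "'k \<Rightarrow> 'b::ring_1 \<Rightarrow> 'b"
    and \<Phi> :: "'a \<Rightarrow> 'b"
    and e :: 'a
  assumes "k_algebra s1"
    and "k_algebra s2"
    and "alg_hom s1 s2 \<Phi>"
    and "surj \<Phi>"
    and "e * e = e"
    and "{x. \<Phi> x = 0} = module.span s1 {e}"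
    and "semisimple_ring TYPE('b)"
  shows "semisimple_ring TYPE('a)"
proof -
  interpret lin: Vector_Spaces.linear s1 s2 \<Phi>
    using assms(3) by (simp add: alg_hom_def)
  interpret surjective_ring_hom \<Phi>
    using assms(3,4) by unfold_locales (simp_all add: alg_hom_def lin.add)
  have "\<Phi> e = 0"
    using assms(6) lin.vs1.span_base by blast
  have kernel: "\<Phi> x = 0 \<longleftrightarrow> (\<exists>a. x = a * e)" for x
  proof
    assume "\<Phi> x = 0"
    then obtain c where "x = s1 c e"
      using assms(6) lin.vs1.span_singleton by blast
    then have "x = s1 c 1 * e"
      using k_algebra_scale_eq_mult[OF assms(1), of c e] by simp
    then show "\<exists>a. x = a * e" ..
  next
    assume "\<exists>a. x = a * e"
    then show "\<Phi> x = 0"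
      using \<open>\<Phi> e = 0\<close> by (auto simp: hom_mult)
  qed
  have minimal: "L = {0} \<or> L = {x. \<Phi> x = 0}"
    if "left_ideal L" "L \<subseteq> {x. \<Phi> x = 0}" for L
    using left_ideal_subset_span_singleton[OF assms(1) that(1)] that(2) unfolding assms(6) .
  show ?thesis
    using assms(7,5) kernel minimal by (rule semisimple_ring_if_minimal_idempotent_kernel)
qed

end
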